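(* The class of penny graphs is $(6,1)$-disjointness-expressing.
   Context: A penny graph is the contact graph of a family of pairwise interior-disjoint unit disks in the plane (vertices are the disks, adjacent iff the disks touch). A class $\mathcal{C}$ of graphs is $(s,\kappa)$-disjointness-expressing if for some constant $\alpha>0$, for every positive integer $N$ and every $X\subseteq\{1,\dots,N\}$ one can define graphs $L(X)$ and $R(X)$, each containing a labelled set $S$ of special vertices, such that for all $A,B\subseteq\{1,\dots,N\}$: (i) the graph $g(L(A),R(B))$ obtained by identifying each vertex of $S$ in $L(A)$ with the corresponding vertex of $S$ in $R(B)$ is connected and has at most $\alpha N^{1/\kappa}$ vertices; (ii) the subgraph of $g(L(A),R(B))$ induced by the closed neighborhood $N[S]$ is independent of $A,B$ (for all $A,A',B,B'$ there is an isomorphism between these induced subgraphs that is the identity on $S$) and has at most $s$ vertices; (iii) $g(L(A),R(B))\in\mathcal{C}$ if and only if $A\cap B=\emptyset$. *)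

theory Defs
  imports "HOL-Analysis.Analysis"
begin

definition wf_graph :: "'v set \<Rightarrow> ('v \<times> 'v) set \<Rightarrow> bool" where
  "wf_graph V E \<longleftrightarrow> finite V \<and> E \<subseteq> V \<times> V \<and> sym E \<and> (\<forall>v. (v, v) \<notin> E)"

definition wf_labelled_graph :: "nat \<Rightarrow> 'v set \<Rightarrow> ('v \<times> 'v) set \<Rightarrow> (nat \<Rightarrow> 'v) \<Rightarrow> bool" where
  "wf_labelled_graph k V E \<sigma> \<longleftrightarrow> wf_graph V E \<and> inj_on \<sigma> {..<k} \<and> \<sigma> ` {..<k} \<subseteq> V"

text \<open>Penny graph: contact graph of pairwise interior-disjoint unit disks in the plane
  (identified with the complex numbers); disks of radius 1 centred at p v are interior
  disjoint iff the centres have distance at least 2, and touch iff the distance is 2.\<close>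

definition penny_graph :: "'v set \<Rightarrow> ('v \<times> 'v) set \<Rightarrow> bool" where
  "penny_graph V E \<longleftrightarrow> E \<subseteq> V \<times> V \<and> (\<forall>v. (v, v) \<notin> E) \<and>
     (\<exists>p :: 'v \<Rightarrow> complex.
        (\<forall>u\<in>V. \<forall>v\<in>V. u \<noteq> v \<longrightarrow> dist (p u) (p v) \<ge> 2) \<and>
        (\<forall>u\<in>V. \<forall>v\<in>V. u \<noteq> v \<longrightarrow> ((u, v) \<in> E \<longleftrightarrow> dist (p u) (p v) = 2)))"

text \<open>Gluing: vertices of the left graph become Inl v; a right vertex w becomes Inr w,
  except that the special right vertex with label i is identified with the special
  left vertex with label i.\<close>

definition glue_map :: "nat \<Rightarrow> (nat \<Rightarrow> 'v) \<Rightarrow> (nat \<Rightarrow> 'v) \<Rightarrow> 'v \<Rightarrow> 'v + 'v" where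
  "glue_map k \<sigma>L \<sigma>R w =
     (if \<exists>i<k. w = \<sigma>R i then Inl (\<sigma>L (THE i. i < k \<and> w = \<sigma>R i)) else Inr w)"

definition glue_V :: "nat \<Rightarrow> 'v set \<Rightarrow> (nat \<Rightarrow> 'v) \<Rightarrow> 'v set \<Rightarrow> (nat \<Rightarrow> 'v) \<Rightarrow> ('v + 'v) set" where
  "glue_V k VL \<sigma>L VR \<sigma>R = Inl ` VL \<union> glue_map k \<sigma>L \<sigma>R ` VR"

definition glue_E :: "nat \<Rightarrow> ('v \<times> 'v) set \<Rightarrow> (nat \<Rightarrow> 'v) \<Rightarrow> ('v \<times> 'v) set \<Rightarrow> (nat \<Rightarrow> 'v)
    \<Rightarrow> (('v + 'v) \<times> ('v + 'v)) set" where
  "glue_E k EL \<sigma>L ER \<sigma>R =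
     map_prod Inl Inl ` EL \<union> map_prod (glue_map k \<sigma>L \<sigma>R) (glue_map k \<sigma>L \<sigma>R) ` ER"

definition connected_graph :: "'v set \<Rightarrow> ('v \<times> 'v) set \<Rightarrow> bool" where
  "connected_graph V E \<longleftrightarrow> V \<noteq> {} \<and>
     (\<forall>u\<in>V. \<forall>v\<in>V. (\<lambda>x y. x \<in> V \<and> y \<in> V \<and> (x, y) \<in> E)\<^sup>*\<^sup>* u v)"

definition closed_nbhd :: "'v set \<Rightarrow> ('v \<times> 'v) set \<Rightarrow> 'v set \<Rightarrow> 'v set" where
  "closed_nbhd V E S = S \<union> {v \<in> V. \<exists>u\<in>S. (u, v) \<in> E}"

text \<open>(s, kappa)-disjointness-expressing class C of graphs (C given as a predicate on
  graphs with vertex type nat + nat, the type of glued graphs).\<close>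

definition disjointness_expressing ::
  "((nat + nat) set \<Rightarrow> ((nat + nat) \<times> (nat + nat)) set \<Rightarrow> bool) \<Rightarrow> nat \<Rightarrow> real \<Rightarrow> bool" where
  "disjointness_expressing C s \<kappa> \<longleftrightarrow>
    (\<exists>\<alpha>::real. \<alpha> > 0 \<and>
      (\<forall>N::nat. N \<ge> 1 \<longrightarrow>
        (\<exists>(k::nat) (LV :: nat set \<Rightarrow> nat set) (LE :: nat set \<Rightarrow> (nat \<times> nat) set)
            (L\<sigma> :: nat set \<Rightarrow> nat \<Rightarrow> nat)
            (RV :: nat set \<Rightarrow> nat set) (RE :: nat set \<Rightarrow> (nat \<times> nat) set)
            (R\<sigma> :: nat set \<Rightarrow> nat \<Rightarrow> nat).
          (\<forall>X. X \<subseteq> {1..N} \<longrightarrow>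
             wf_labelled_graph k (LV X) (LE X) (L\<sigma> X) \<and>
             wf_labelled_graph k (RV X) (RE X) (R\<sigma> X)) \<and>
          (\<forall>A B. A \<subseteq> {1..N} \<longrightarrow> B \<subseteq> {1..N} \<longrightarrow>
             (let V = glue_V k (LV A) (L\<sigma> A) (RV B) (R\<sigma> B);
                  E = glue_E k (LE A) (L\<sigma> A) (RE B) (R\<sigma> B);
                  S = (\<lambda>i. Inl (L\<sigma> A i)) ` {..<k}
              in connected_graph V E \<and>
                 real (card V) \<le> \<alpha> * real N powr (1 / \<kappa>) \<and>
                 card (closed_nbhd V E S) \<le> s \<and>
                 (C V E \<longleftrightarrow> A \<inter> B = {}))) \<and>
          (\<forall>A B A' B'. A \<subseteq> {1..N} \<longrightarrow> B \<subseteq> {1..N} \<longrightarrow> A' \<subseteq> {1..N} \<longrightarrow> B' \<subseteq> {1..N} \<longrightarrow>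
             (let V = glue_V k (LV A) (L\<sigma> A) (RV B) (R\<sigma> B);
                  E = glue_E k (LE A) (L\<sigma> A) (RE B) (R\<sigma> B);
                  V' = glue_V k (LV A') (L\<sigma> A') (RV B') (R\<sigma> B');
                  E' = glue_E k (LE A') (L\<sigma> A') (RE B') (R\<sigma> B');
                  NS = closed_nbhd V E ((\<lambda>i. Inl (L\<sigma> A i)) ` {..<k});
                  NS' = closed_nbhd V' E' ((\<lambda>i. Inl (L\<sigma> A' i)) ` {..<k})
              in \<exists>f. bij_betw f NS NS' \<and>
                    (\<forall>i<k. f (Inl (L\<sigma> A i)) = Inl (L\<sigma> A' i)) \<and>
                    (\<forall>u\<in>NS. \<forall>v\<in>NS. (u, v) \<in> E \<longleftrightarrow> (f u, f v) \<in> E'))))))"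

end

theory Submission
  imports Defs "HOL-Library.Nat_Bijection"
begin

text \<open>Both labelled graphs are unit-distance graphs in the triangular lattice, sharing the special
  edge \<open>(0, 0)(1, 0)\<close>. The left graph is a strip of triangles above that edge carrying a pendant
  tooth \<open>(2i + 4, 0)\<close> for each \<open>i \<in> A\<close>; the right graph is a strip below it carrying a tooth
  \<open>(2j + 4, -1)\<close> for each \<open>j \<in> B\<close>. Every vertex of the glued graph is reached from the
  special edge through a chain of triangles sharing edges, so any penny realization puts all
  vertices in lattice position up to a plane motion. Hence the glued graph is a penny graph iff
  its edges are exactly the lattice-adjacent pairs of its vertices, and the only adjacent pairs
  that are not edges are the teeth \<open>(2i + 4, 0)\<close>, \<open>(2i + 4, -1)\<close> with \<open>i \<in> A \<inter> B\<close>. The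
  graph has \<open>O(N)\<close> vertices, and the closed neighbourhood of the special edge consists of the
  same six vertices for all \<open>A\<close>, \<open>B\<close>.\<close>

section \<open>Triangular lattice\<close>

definition tri_norm2 :: "int \<times> int \<Rightarrow> int" where
  "tri_norm2 v = (fst v)\<^sup>2 + fst v * snd v + (snd v)\<^sup>2"

definition tri_adj :: "int \<times> int \<Rightarrow> int \<times> int \<Rightarrow> bool" where
  "tri_adj a b \<longleftrightarrow> tri_norm2 (b - a) = 1"

definition tri_triangle :: "int \<times> int \<Rightarrow> int \<times> int \<Rightarrow> int \<times> int \<Rightarrow> bool" where
  "tri_triangle a b c \<longleftrightarrow> tri_adj a b \<and> tri_adj b c \<and> tri_adj a c"

text \<open>Lattice coordinates \<open>(x, y)\<close> denote the point \<open>2x + 2y\<omega>\<close> with \<open>\<omega> = (1 + i sqrt 3) / 2\<close>,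
  so that unit disks centred at adjacent lattice points touch and \<open>tri_norm2\<close> is a quarter of
  the squared distance.\<close>

definition tri_point :: "int \<times> int \<Rightarrow> complex" where
  "tri_point v = Complex (2 * of_int (fst v) + of_int (snd v)) (sqrt 3 * of_int (snd v))"

definition lattice_edges :: "(int \<times> int) set \<Rightarrow> ((int \<times> int) \<times> (int \<times> int)) set" where
  "lattice_edges P = {(a, b). a \<in> P \<and> b \<in> P \<and> tri_adj a b}"

lemma four_tri_norm2: "4 * tri_norm2 v = (2 * fst v + snd v)\<^sup>2 + 3 * (snd v)\<^sup>2"
  unfolding tri_norm2_def by (simp add: power2_eq_square algebra_simps)

lemma tri_norm2_minus: "tri_norm2 (- v) = tri_norm2 v"
  by (simp add: tri_norm2_def)

lemma tri_norm2_ge_1: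
  assumes "v \<noteq> 0"
  shows "tri_norm2 v \<ge> 1"
proof -
  have "snd v \<noteq> 0 \<or> 2 * fst v + snd v \<noteq> 0"
    using assms by (auto simp: prod_eq_iff)
  then have "4 * tri_norm2 v > 0"
    unfolding four_tri_norm2 by (elim disjE) (simp_all add: add_nonneg_pos add_pos_nonneg)
  then show ?thesis by simp
qed

lemma tri_norm2_eq_1_iff:
  "tri_norm2 v = 1 \<longleftrightarrow> v \<in> {(1, 0), (-1, 0), (0, 1), (0, -1), (1, -1), (-1, 1)}"
proof
  assume v: "tri_norm2 v = 1"
  then have sum4: "(2 * fst v + snd v)\<^sup>2 + 3 * (snd v)\<^sup>2 = 4"
    using four_tri_norm2[of v] by simp
  have "\<bar>snd v\<bar> \<le> 1"
    using sum4 zero_le_power2[of "2 * fst v + snd v"] abs_square_le_1[of "snd v"] by linarith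
  moreover have "(2 * fst v + snd v)\<^sup>2 \<le> 4"
    using sum4 zero_le_power2[of "snd v"] by linarith
  then have "\<bar>2 * fst v + snd v\<bar> \<le> 2"
    using abs_le_square_iff[of "2 * fst v + snd v" 2] by simp
  ultimately have "fst v \<in> {-1, 0, 1}" "snd v \<in> {-1, 0, 1}" by auto
  with v show "v \<in> {(1, 0), (-1, 0), (0, 1), (0, -1), (1, -1), (-1, 1)}"
    by (cases v) (auto simp: tri_norm2_def)
qed (auto simp: tri_norm2_def)

lemma tri_norm2_double: "tri_norm2 (v + v) = 4 * tri_norm2 v"
  by (simp add: tri_norm2_def power2_eq_square algebra_simps)

lemma tri_adj_sym: "tri_adj a b \<Longrightarrow> tri_adj b a"
  by (metis tri_adj_def minus_diff_eq tri_norm2_minus)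

lemma tri_adj_irrefl: "\<not> tri_adj a a"
  by (simp add: tri_adj_def tri_norm2_def)

lemma tri_point_diff: "tri_point (a - b) = tri_point a - tri_point b"
  by (simp add: tri_point_def complex_eq_iff algebra_simps)

lemma norm_tri_point: "cmod (tri_point v) = 2 * sqrt (tri_norm2 v)"
proof -
  have "(cmod (tri_point v))\<^sup>2 = (2 * of_int (fst v) + of_int (snd v))\<^sup>2 + 3 * (of_int (snd v))\<^sup>2"
    by (simp add: cmod_power2 tri_point_def power_mult_distrib)
  also have "\<dots> = of_int (4 * tri_norm2 v)"
    unfolding four_tri_norm2 by simp
  finally have "cmod (tri_point v) = sqrt (4 * tri_norm2 v)"
    by (metis norm_ge_zero real_sqrt_unique of_int_mult of_int_numeral)
  then show ?thesis by (simp add: real_sqrt_mult)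
qed

lemma dist_tri_point: "dist (tri_point a) (tri_point b) = 2 * sqrt (tri_norm2 (b - a))"
  by (metis dist_norm norm_minus_commute norm_tri_point tri_point_diff)

lemma dist_tri_point_ge_2: "a \<noteq> b \<Longrightarrow> dist (tri_point a) (tri_point b) \<ge> 2"
  using tri_norm2_ge_1[of "b - a"] by (simp add: dist_tri_point)

lemma dist_tri_point_eq_2: "dist (tri_point a) (tri_point b) = 2 \<longleftrightarrow> tri_adj a b"
  by (simp add: dist_tri_point tri_adj_def)

lemma tri_triangle_reflect:
  assumes "tri_triangle a b c"
  shows "tri_adj b (b + c - a)" "tri_adj c (b + c - a)" "b + c - a \<noteq> a"
proof -
  show "tri_adj b (b + c - a)" "tri_adj c (b + c - a)"
    using assms by (simp_all add: tri_triangle_def tri_adj_def algebra_simps)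
  show "b + c - a \<noteq> a"
  proof
    assume "b + c - a = a"
    then have "c - b = (a - b) + (a - b)"
      by (simp add: algebra_simps)
    then have "tri_norm2 (c - b) = 4 * tri_norm2 (a - b)"
      by (metis tri_norm2_double)
    moreover have "tri_norm2 (a - b) = 1"
      using assms tri_adj_sym by (simp add: tri_triangle_def tri_adj_def)
    ultimately have "tri_norm2 (c - b) = 4"
      by simp
    then show False
      using assms by (simp add: tri_triangle_def tri_adj_def)
  qed
qed

lemma lattice_edges_subset: "lattice_edges P \<subseteq> P \<times> P"
  by (auto simp: lattice_edges_def)

lemma sym_lattice_edges: "sym (lattice_edges P)"
  by (auto simp: sym_def lattice_edges_def intro: tri_adj_sym)

lemma lattice_edges_irrefl: "(v, v) \<notin> lattice_edges P"
  by (simp add: lattice_edges_def tri_adj_irrefl)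

lemma lattice_edges_Restr: "Restr (lattice_edges P) S = lattice_edges (P \<inter> S)"
  by (auto simp: lattice_edges_def)

lemma wf_graph_lattice_edges: "finite P \<Longrightarrow> wf_graph P (lattice_edges P)"
  by (simp add: wf_graph_def lattice_edges_subset sym_lattice_edges lattice_edges_irrefl)

section \<open>Equilateral triangles and plane motions\<close>

lemma unit_circles_meet:
  fixes x :: complex
  assumes "cmod x = 1" "cmod (x - 1) = 1"
  shows "Re x = 1/2" "(Im x)\<^sup>2 = 3/4"
proof -
  have "(cmod x)\<^sup>2 = 1" "(cmod (x - 1))\<^sup>2 = 1"
    using assms by simp_all
  then have circles: "(Re x)\<^sup>2 + (Im x)\<^sup>2 = 1" "(Re x - 1)\<^sup>2 + (Im x)\<^sup>2 = 1"
    by (simp_all add: cmod_power2)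
  then show "Re x = 1/2"
    by (simp add: power2_eq_square algebra_simps)
  with circles show "(Im x)\<^sup>2 = 3/4"
    by (simp add: power2_eq_square)
qed

lemma equilateral_third_vertex:
  fixes a b c w :: complex
  assumes "b \<noteq> c" and "dist a b = dist b c" "dist a c = dist b c"
    and "dist w b = dist b c" "dist w c = dist b c"
  shows "w = a \<or> w = b + c - a"
proof -
  define u where "u = c - b"
  have u: "u \<noteq> 0" "cmod u = cmod (b - c)"
    using assms(1) by (simp_all add: u_def norm_minus_commute)
  define x y where "x = (w - b) / u" and "y = (a - b) / u"
  have "x - 1 = (w - c) / u" "y - 1 = (a - c) / u"
    using u by (simp_all add: x_def y_def u_def field_simps)
  then have "Re x = 1/2" "(Im x)\<^sup>2 = 3/4" "Re y = 1/2" "(Im y)\<^sup>2 = 3/4"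
    using assms u unit_circles_meet[of x] unit_circles_meet[of y]
    by (simp_all add: x_def y_def norm_divide dist_norm)
  then have "Im x = Im y \<or> Im x = - Im y" and "Re x = Re y" "Re x = 1 - Re y"
    by (metis power2_eq_iff, simp_all)
  then have "x = y \<or> x = 1 - y"
    by (auto simp: complex_eq_iff)
  moreover have "w = b + u * x" "u * y = a - b"
    using u by (simp_all add: x_def y_def)
  ultimately show ?thesis
    by (auto simp: u_def right_diff_distrib)
qed

definition plane_motion :: "bool \<Rightarrow> complex \<Rightarrow> complex \<Rightarrow> complex \<Rightarrow> complex" where
  "plane_motion flip c e z = c + e * (if flip then cnj z else z)"

lemma plane_motion_reflect:
  "plane_motion flip c e (u + v - w) =
     plane_motion flip c e u + plane_motion flip c e v - plane_motion flip c e w"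
  by (simp add: plane_motion_def algebra_simps)

lemma dist_plane_motion:
  assumes "cmod e = 1"
  shows "dist (plane_motion flip c e u) (plane_motion flip c e v) = dist u v"
proof -
  have "plane_motion flip c e u - plane_motion flip c e v =
      e * (if flip then cnj (u - v) else u - v)"
    by (simp add: plane_motion_def algebra_simps)
  then show ?thesis
    using assms by (simp add: dist_norm norm_mult del: complex_cnj_diff)
qed

lemma tri_point_reflect: "tri_point (b + c - a) = tri_point b + tri_point c - tri_point a"
  by (simp add: tri_point_def complex_eq_iff algebra_simps)

lemma unit_triangle_congruent:
  assumes "dist z0 z1 = 2" "dist z0 z2 = 2" "dist z1 z2 = 2"
  shows "\<exists>flip c e. cmod e = 1 \<and> z0 = plane_motion flip c e (tri_point (0, 0)) \<and>
           z1 = plane_motion flip c e (tri_point (1, 0)) \<and>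
           z2 = plane_motion flip c e (tri_point (0, 1))"
proof -
  define e where "e = (z1 - z0) / 2"
  have e: "cmod e = 1"
    using assms(1) by (simp add: e_def norm_divide dist_norm norm_minus_commute)
  have T0: "plane_motion flip z0 e (tri_point (0, 0)) = z0" for flip
    by (simp add: plane_motion_def tri_point_def complex_eq_iff)
  have e2: "e * 2 = z1 - z0"
    by (simp add: e_def)
  have "tri_point (1, 0) = 2"
    by (simp add: tri_point_def complex_eq_iff)
  then have T1: "plane_motion flip z0 e (tri_point (1, 0)) = z1" for flip
    using e2 by (simp add: plane_motion_def)
  define w where "w = plane_motion False z0 e (tri_point (0, 1))"
  have "cnj (tri_point (0, 1)) = 2 - tri_point (0, 1)"
    by (simp add: tri_point_def complex_eq_iff)
  then have "plane_motion True z0 e (tri_point (0, 1)) = z0 + e * 2 - e * tri_point (0, 1)"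
    unfolding plane_motion_def by (simp only: if_True right_diff_distrib add_diff_eq)
  also have "\<dots> = z0 + z1 - w"
    using e2 by (simp add: w_def plane_motion_def)
  finally have "plane_motion True z0 e (tri_point (0, 1)) = z0 + z1 - w" .
  moreover have "dist w z0 = 2" "dist w z1 = 2"
    using dist_plane_motion[OF e, of False z0 "tri_point (0, 1)" "tri_point (0, 0)"]
      dist_plane_motion[OF e, of False z0 "tri_point (0, 1)" "tri_point (1, 0)"]
    by (simp_all add: w_def T0 T1 dist_tri_point_eq_2 tri_adj_def tri_norm2_def)
  then have "z2 = w \<or> z2 = z0 + z1 - w"
    using assms by (intro equilateral_third_vertex) (auto simp: dist_commute)
  ultimately show ?thesis
    using e T0 T1 unfolding w_def by metis
qed

section \<open>Penny realizations and relabelling\<close>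

definition penny_realization :: "'v set \<Rightarrow> ('v \<times> 'v) set \<Rightarrow> ('v \<Rightarrow> complex) \<Rightarrow> bool" where
  "penny_realization V E p \<longleftrightarrow>
     (\<forall>u\<in>V. \<forall>v\<in>V. u \<noteq> v \<longrightarrow> dist (p u) (p v) \<ge> 2) \<and>
     (\<forall>u\<in>V. \<forall>v\<in>V. u \<noteq> v \<longrightarrow> ((u, v) \<in> E \<longleftrightarrow> dist (p u) (p v) = 2))"

lemma penny_graph_iff_realization:
  "penny_graph V E \<longleftrightarrow> E \<subseteq> V \<times> V \<and> (\<forall>v. (v, v) \<notin> E) \<and> (\<exists>p. penny_realization V E p)"
  by (simp add: penny_graph_def penny_realization_def)

lemma penny_graph_lattice_edges: "penny_graph P (lattice_edges P)"
  unfolding penny_graph_iff_realization penny_realization_def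
  by (intro conjI exI[of _ tri_point])
    (auto simp: lattice_edges_def tri_adj_irrefl dist_tri_point_ge_2 dist_tri_point_eq_2)

lemma map_prod_image_mem_iff: "inj h \<Longrightarrow> (h u, h v) \<in> map_prod h h ` E \<longleftrightarrow> (u, v) \<in> E"
  using inj_image_mem_iff[OF prod.inj_map, of h h "(u, v)"] by simp

lemma penny_realization_image:
  assumes "inj h"
  shows "penny_realization (h ` V) (map_prod h h ` E) p \<longleftrightarrow> penny_realization V E (p \<circ> h)"
  using assms by (auto simp: penny_realization_def map_prod_image_mem_iff inj_eq)

lemma penny_graph_image:
  assumes "inj h"
  shows "penny_graph (h ` V) (map_prod h h ` E) \<longleftrightarrow> penny_graph V E"
proof -
  have "h ` V \<times> h ` V = map_prod h h ` (V \<times> V)"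
    by (simp add: map_prod_surj_on)
  then have "map_prod h h ` E \<subseteq> h ` V \<times> h ` V \<longleftrightarrow> E \<subseteq> V \<times> V"
    by (simp add: inj_image_subset_iff[OF prod.inj_map[OF assms assms]])
  moreover have "(\<forall>w. (w, w) \<notin> map_prod h h ` E) \<longleftrightarrow> (\<forall>v. (v, v) \<notin> E)"
    using assms by (auto simp: inj_eq)
  moreover have "(\<exists>p. penny_realization V E (p \<circ> h)) \<longleftrightarrow> (\<exists>q. penny_realization V E q)"
    by (metis assms inv_o_cancel o_assoc comp_id)
  ultimately show ?thesis
    by (simp add: penny_graph_iff_realization penny_realization_image[OF assms])
qed

lemma connected_graphI:
  assumes E: "E \<subseteq> V \<times> V" "sym E" and "v0 \<in> V"
    and reach: "\<And>v. v \<in> V \<Longrightarrow> (\<lambda>x y. (x, y) \<in> E)\<^sup>*\<^sup>* v0 v"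
  shows "connected_graph V E"
proof -
  have "(\<lambda>x y. x \<in> V \<and> y \<in> V \<and> (x, y) \<in> E) = (\<lambda>x y. (x, y) \<in> E)"
    using E(1) by blast
  moreover have "(\<lambda>x y. (x, y) \<in> E)\<inverse>\<inverse> = (\<lambda>x y. (x, y) \<in> E)"
    using E(2) by (auto simp: sym_def fun_eq_iff)
  then have "(\<lambda>x y. (x, y) \<in> E)\<^sup>*\<^sup>* u v0" if "u \<in> V" for u
    using rtranclp_converseI[OF reach[OF that]] by simp
  ultimately show ?thesis
    unfolding connected_graph_def using \<open>v0 \<in> V\<close> reach by (auto intro: rtranclp_trans)
qed

lemma connected_graph_image:
  assumes "connected_graph V E"
  shows "connected_graph (h ` V) (map_prod h h ` E)"
proof -
  let ?E = "\<lambda>x y. x \<in> V \<and> y \<in> V \<and> (x, y) \<in> E"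
  let ?hE = "\<lambda>x y. x \<in> h ` V \<and> y \<in> h ` V \<and> (x, y) \<in> map_prod h h ` E"
  have "?hE\<^sup>*\<^sup>* (h u) (h v)" if "?E\<^sup>*\<^sup>* u v" for u v
    using that
  proof (induction rule: rtranclp_induct)
    case (step y z)
    from step.IH show ?case
      by (rule rtranclp.rtrancl_into_rtrancl) (use step.hyps(2) in force)
  qed simp
  then show ?thesis
    using assms unfolding connected_graph_def by blast
qed

lemma closed_nbhd_image:
  assumes "inj h"
  shows "closed_nbhd (h ` V) (map_prod h h ` E) (h ` S) = h ` closed_nbhd V E S"
  using assms by (auto simp: closed_nbhd_def map_prod_image_mem_iff inj_eq) (auto intro!: imageI)

lemma wf_graph_image:
  assumes "inj h" "wf_graph V E"
  shows "wf_graph (h ` V) (map_prod h h ` E)"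
  using assms by (auto simp: wf_graph_def sym_def map_prod_image_mem_iff inj_eq)

section \<open>Rigidity\<close>

definition unit_triangle_edges :: "((int \<times> int) \<times> (int \<times> int)) set" where
  "unit_triangle_edges = {((0, 0), (1, 0)), ((0, 0), (0, 1)), ((1, 0), (0, 1))}"

text \<open>The points that every penny realization of \<open>(P, E)\<close> must place in lattice position once the
  unit triangle is: a penny touching two pennies \<open>b\<close>, \<open>c\<close> of a placed unit triangle \<open>abc\<close> lies
  at \<open>a\<close> or at the reflection \<open>b + c - a\<close>, and not at \<open>a\<close> since pennies do not overlap.\<close>

inductive_set rigid_closure :: "(int \<times> int) set \<Rightarrow> ((int \<times> int) \<times> (int \<times> int)) set \<Rightarrow> (int \<times> int) set"
  for P E where
  origin: "(0, 0) \<in> rigid_closure P E"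
| unit_x: "(1, 0) \<in> rigid_closure P E"
| unit_y: "(0, 1) \<in> rigid_closure P E"
| reflect: "\<lbrakk>a \<in> rigid_closure P E; b \<in> rigid_closure P E; c \<in> rigid_closure P E;
    tri_triangle a b c; b + c - a \<in> P; (b, b + c - a) \<in> E; (c, b + c - a) \<in> E\<rbrakk>
    \<Longrightarrow> b + c - a \<in> rigid_closure P E"

lemma rigid_closure_congruent:
  assumes p: "penny_realization P E p" and E: "E \<subseteq> P \<times> P" and unit: "unit_triangle_edges \<subseteq> E"
  shows "\<exists>flip z e. cmod e = 1 \<and>
           (\<forall>q \<in> rigid_closure P E. q \<in> P \<and> p q = plane_motion flip z e (tri_point q))"
proof -
  have edge: "dist (p u) (p v) = 2" if "(u, v) \<in> E" "u \<noteq> v" for u v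
    using p E that unfolding penny_realization_def by blast
  have apart: "p u \<noteq> p v" if "u \<in> P" "v \<in> P" "u \<noteq> v" for u v
  proof -
    have "dist (p u) (p v) \<ge> 2"
      using p that unfolding penny_realization_def by blast
    then show ?thesis by auto
  qed
  have "dist (p (0, 0)) (p (1, 0)) = 2" "dist (p (0, 0)) (p (0, 1)) = 2"
    "dist (p (1, 0)) (p (0, 1)) = 2"
    using unit unfolding unit_triangle_edges_def by (simp_all add: edge)
  then obtain flip z e where e: "cmod e = 1"
    and T: "p (0, 0) = plane_motion flip z e (tri_point (0, 0))"
      "p (1, 0) = plane_motion flip z e (tri_point (1, 0))"
      "p (0, 1) = plane_motion flip z e (tri_point (0, 1))"
    using unit_triangle_congruent by blast
  have "q \<in> P \<and> p q = plane_motion flip z e (tri_point q)" if "q \<in> rigid_closure P E" for q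
    using that
  proof (induction rule: rigid_closure.induct)
    case (reflect a b c)
    let ?T = "plane_motion flip z e"
    from reflect.hyps(4) have adj: "tri_adj b (b + c - a)" "tri_adj c (b + c - a)" "b + c - a \<noteq> a"
      by (rule tri_triangle_reflect)+
    have "dist (?T (tri_point u)) (?T (tri_point v)) = 2" if "tri_adj u v" for u v
      using that by (simp add: dist_plane_motion[OF e] dist_tri_point_eq_2)
    then have "dist (p a) (p b) = 2" "dist (p a) (p c) = 2" "dist (p b) (p c) = 2"
      using reflect.IH reflect.hyps(4) by (auto simp: tri_triangle_def)
    moreover have "dist (p (b + c - a)) (p b) = 2" "dist (p (b + c - a)) (p c) = 2"
      using edge reflect.hyps adj tri_adj_irrefl by (metis dist_commute)+
    moreover have "p (b + c - a) \<noteq> p a"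
      using apart reflect adj by blast
    moreover have "p b \<noteq> p c"
      using reflect.hyps(4) reflect.IH tri_adj_irrefl apart unfolding tri_triangle_def by metis
    ultimately have "p (b + c - a) = p b + p c - p a"
      using equilateral_third_vertex[where a = "p a" and b = "p b" and c = "p c"
          and w = "p (b + c - a)"]
      by (simp add: dist_commute)
    then show ?case
      using reflect by (simp add: tri_point_reflect plane_motion_reflect)
  qed (use T unit E in \<open>auto simp: unit_triangle_edges_def\<close>)
  then show ?thesis
    using e by blast
qed

lemma penny_graph_rigid_iff:
  assumes E: "E \<subseteq> P \<times> P" "\<forall>v. (v, v) \<notin> E" and unit: "unit_triangle_edges \<subseteq> E"
    and rigid: "P \<subseteq> rigid_closure P E"
  shows "penny_graph P E \<longleftrightarrow> E = lattice_edges P"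
proof
  assume "penny_graph P E"
  then obtain p where p: "penny_realization P E p"
    by (auto simp: penny_graph_iff_realization)
  then obtain flip z e
    where e: "cmod e = 1" and T: "\<forall>q\<in>P. p q = plane_motion flip z e (tri_point q)"
    using rigid_closure_congruent[OF p E(1) unit] rigid by blast
  have adj: "(u, v) \<in> E \<longleftrightarrow> tri_adj u v" if "u \<in> P" "v \<in> P" "u \<noteq> v" for u v
    using p that T unfolding penny_realization_def
    by (simp add: dist_plane_motion[OF e] dist_tri_point_eq_2)
  have "(u, v) \<in> E \<longleftrightarrow> u \<in> P \<and> v \<in> P \<and> tri_adj u v" for u v
  proof (cases "u = v")
    case True
    then show ?thesis using E(2) tri_adj_irrefl by metis
  next
    case False
    then show ?thesis using adj[of u v] E(1) by blast
  qed
  then show "E = lattice_edges P"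
    by (auto simp: lattice_edges_def)
qed (simp add: penny_graph_lattice_edges)

lemma rigid_closure_mono: "P \<subseteq> P' \<Longrightarrow> E \<subseteq> E' \<Longrightarrow> rigid_closure P E \<subseteq> rigid_closure P' E'"
proof
  fix q assume "q \<in> rigid_closure P E" "P \<subseteq> P'" "E \<subseteq> E'"
  then show "q \<in> rigid_closure P' E'"
    by (induction rule: rigid_closure.induct) (auto intro: rigid_closure.intros)
qed

lemma rigid_closure_reachable:
  assumes "unit_triangle_edges \<subseteq> E" "q \<in> rigid_closure P E"
  shows "(\<lambda>x y. (x, y) \<in> E)\<^sup>*\<^sup>* (0, 0) q"
  using assms(2)
proof (induction rule: rigid_closure.induct)
  case (reflect a b c)
  then show ?case
    by (meson rtranclp.rtrancl_into_rtrancl)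
qed (use assms(1) in \<open>auto simp: unit_triangle_edges_def\<close>)

lemma rigid_closure_lattice_reflect:
  assumes "a \<in> rigid_closure Q (lattice_edges Q)" "b \<in> rigid_closure Q (lattice_edges Q)"
    "c \<in> rigid_closure Q (lattice_edges Q)" "tri_triangle a b c" "b \<in> Q" "c \<in> Q" "b + c - a \<in> Q"
  shows "b + c - a \<in> rigid_closure Q (lattice_edges Q)"
  using assms tri_triangle_reflect[OF assms(4)]
  by (intro rigid_closure.reflect) (auto simp: lattice_edges_def)

lemma rigid_closure_strip:
  fixes x0 x1 y :: int and Q :: "(int \<times> int) set"
  defines "R \<equiv> rigid_closure Q (lattice_edges Q)"
  assumes strip: "{x0..x1} \<times> {y, y + 1} \<subseteq> Q"
    and start: "(x0, y) \<in> R" "(x0, y + 1) \<in> R" "(x0 + 1, y) \<in> R"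
  shows "{x0..x1} \<times> {y, y + 1} \<subseteq> R"
proof -
  have "x \<le> x1 \<longrightarrow> (x, y) \<in> R \<and> (x, y + 1) \<in> R \<and> (x + 1 \<le> x1 \<longrightarrow> (x + 1, y) \<in> R)"
    if "x0 \<le> x" for x
    using that
  proof (induction x rule: int_ge_induct)
    case base
    then show ?case using start by simp
  next
    case (step x)
    show ?case
    proof
      assume x: "x + 1 \<le> x1"
      with step have R: "(x, y) \<in> R" "(x, y + 1) \<in> R" "(x + 1, y) \<in> R"
        by auto
      have in_Q: "(x', y') \<in> Q" if "x0 \<le> x'" "x' \<le> x1" "y' = y \<or> y' = y + 1" for x' y'
        using strip that by auto
      have Q: "(x, y + 1) \<in> Q" "(x + 1, y) \<in> Q" "(x + 1, y + 1) \<in> Q"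
        using step.hyps x by (auto intro!: in_Q)
      have up: "(x + 1, y + 1) \<in> R"
        using rigid_closure_lattice_reflect[of "(x, y)" Q "(x, y + 1)" "(x + 1, y)"] R Q
        by (simp add: R_def tri_triangle_def tri_adj_def tri_norm2_def)
      have "(x + 2, y) \<in> R" if "x + 2 \<le> x1"
        using rigid_closure_lattice_reflect[of "(x, y + 1)" Q "(x + 1, y)" "(x + 1, y + 1)"]
          R up Q in_Q[of "x + 2" y] step.hyps that
        by (simp add: R_def tri_triangle_def tri_adj_def tri_norm2_def)
      then show "(x + 1, y) \<in> R \<and> (x + 1, y + 1) \<in> R \<and> (x + 1 + 1 \<le> x1 \<longrightarrow> (x + 1 + 1, y) \<in> R)"
        using R up by (simp add: add.assoc)
    qed
  qed
  then show ?thesis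
    by auto
qed

section \<open>The glued lattice configuration\<close>

text \<open>The teeth lie two apart, so that they do not touch each other, and from \<open>x = 6\<close> on, clear
  of \<open>(1, -1)\<close> and \<open>(2, -1)\<close>; each tooth hangs on a triangle of its strip.\<close>

definition left_pts :: "nat \<Rightarrow> nat set \<Rightarrow> (int \<times> int) set" where
  "left_pts N A = {(0, 0), (1, 0)} \<union> {0..2 * int N + 5} \<times> {1, 2} \<union> (\<lambda>i. (2 * int i + 4, 0)) ` A"

definition right_pts :: "nat \<Rightarrow> nat set \<Rightarrow> (int \<times> int) set" where
  "right_pts N B = {(0, 0), (1, 0), (1, -1), (2, -1)} \<union> {1..2 * int N + 5} \<times> {-3, -2}
     \<union> (\<lambda>j. (2 * int j + 4, -1)) ` B"

definition glued_pts :: "nat \<Rightarrow> nat set \<Rightarrow> nat set \<Rightarrow> (int \<times> int) set" where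
  "glued_pts N A B = left_pts N A \<union> right_pts N B"

definition glued_edges :: "nat \<Rightarrow> nat set \<Rightarrow> nat set \<Rightarrow> ((int \<times> int) \<times> (int \<times> int)) set" where
  "glued_edges N A B = lattice_edges (left_pts N A) \<union> lattice_edges (right_pts N B)"

lemma left_pts_rigid:
  assumes "A \<subseteq> {1..N}"
  shows "left_pts N A \<subseteq> rigid_closure (left_pts N A) (lattice_edges (left_pts N A))"
proof -
  let ?R = "rigid_closure (left_pts N A) (lattice_edges (left_pts N A))"
  note reflect = rigid_closure_lattice_reflect[of _ "left_pts N A"]
  note base = rigid_closure.origin rigid_closure.unit_x rigid_closure.unit_y
  note lattice = tri_triangle_def tri_adj_def tri_norm2_def left_pts_def
  have "(1, 1) \<in> ?R"
    using reflect[of "(0, 0)" "(1, 0)" "(0, 1)"] base by (simp add: lattice)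
  moreover have "(0, 2) \<in> ?R"
    using reflect[of "(1, 0)" "(0, 1)" "(1, 1)"] base \<open>(1, 1) \<in> ?R\<close> by (simp add: lattice)
  moreover have "{0..2 * int N + 5} \<times> {1, 2} \<subseteq> left_pts N A"
    by (auto simp: left_pts_def)
  ultimately have strip: "{0..2 * int N + 5} \<times> {1, 2} \<subseteq> ?R"
    using rigid_closure_strip[of 0 "2 * int N + 5" 1 "left_pts N A"] base by simp
  have "(2 * int i + 4, 0) \<in> ?R" if "i \<in> A" for i
  proof -
    have "int i \<le> int N"
      using that assms by auto
    then have "(2 * int i + 3, 2) \<in> ?R" "(2 * int i + 3, 1) \<in> ?R" "(2 * int i + 4, 1) \<in> ?R"
      using strip by auto
    moreover have "(2 * int i + 3, 1) \<in> left_pts N A" "(2 * int i + 4, 1) \<in> left_pts N A"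
      "(2 * int i + 4, 0) \<in> left_pts N A"
      using \<open>int i \<le> int N\<close> that by (auto simp: left_pts_def)
    ultimately show ?thesis
      using reflect[of "(2 * int i + 3, 2)" "(2 * int i + 3, 1)" "(2 * int i + 4, 1)"]
      by (simp add: tri_triangle_def tri_adj_def tri_norm2_def)
  qed
  with strip base show ?thesis
    by (auto simp: left_pts_def)
qed

lemma right_pts_rigid:
  assumes "B \<subseteq> {1..N}"
  shows "right_pts N B \<subseteq> rigid_closure (right_pts N B) (lattice_edges (right_pts N B))"
proof -
  let ?R = "rigid_closure (right_pts N B) (lattice_edges (right_pts N B))"
  note reflect = rigid_closure_lattice_reflect[of _ "right_pts N B"]
  note base = rigid_closure.origin rigid_closure.unit_x rigid_closure.unit_y
  note lattice = tri_triangle_def tri_adj_def tri_norm2_def right_pts_def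
  \<comment> \<open>\<open>(0, 1)\<close> is no point of the right graph, but as a base point it may serve as apex\<close>
  have "(1, -1) \<in> ?R"
    using reflect[of "(0, 1)" "(0, 0)" "(1, 0)"] base by (simp add: lattice)
  moreover have "(2, -1) \<in> ?R"
    using reflect[of "(0, 0)" "(1, 0)" "(1, -1)"] base \<open>(1, -1) \<in> ?R\<close> by (simp add: lattice)
  moreover have "(2, -2) \<in> ?R"
    using reflect[of "(1, 0)" "(1, -1)" "(2, -1)"] base calculation by (simp add: lattice)
  moreover have "(1, -2) \<in> ?R"
    using reflect[of "(2, -1)" "(1, -1)" "(2, -2)"] calculation by (simp add: lattice)
  moreover have "(2, -3) \<in> ?R"
    using reflect[of "(1, -1)" "(1, -2)" "(2, -2)"] calculation by (simp add: lattice)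
  moreover have "(1, -3) \<in> ?R"
    using reflect[of "(2, -2)" "(1, -2)" "(2, -3)"] calculation by (simp add: lattice)
  moreover have "{1..2 * int N + 5} \<times> {-3, -2} \<subseteq> right_pts N B"
    by (auto simp: right_pts_def)
  ultimately have strip: "{1..2 * int N + 5} \<times> {-3, -2} \<subseteq> ?R"
    using rigid_closure_strip[of 1 "2 * int N + 5" "-3" "right_pts N B"] by simp
  have "(2 * int j + 4, -1) \<in> ?R" if "j \<in> B" for j
  proof -
    have "int j \<le> int N"
      using that assms by auto
    then have "(2 * int j + 5, -3) \<in> ?R" "(2 * int j + 4, -2) \<in> ?R" "(2 * int j + 5, -2) \<in> ?R"
      using strip by auto
    moreover have "(2 * int j + 4, -2) \<in> right_pts N B" "(2 * int j + 5, -2) \<in> right_pts N B"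
      "(2 * int j + 4, -1) \<in> right_pts N B"
      using \<open>int j \<le> int N\<close> that by (auto simp: right_pts_def)
    ultimately show ?thesis
      using reflect[of "(2 * int j + 5, -3)" "(2 * int j + 4, -2)" "(2 * int j + 5, -2)"]
      by (simp add: tri_triangle_def tri_adj_def tri_norm2_def)
  qed
  with strip base \<open>(1, -1) \<in> ?R\<close> \<open>(2, -1) \<in> ?R\<close> show ?thesis
    by (auto simp: right_pts_def)
qed

lemma glued_pts_rigid:
  assumes "A \<subseteq> {1..N}" "B \<subseteq> {1..N}"
  shows "glued_pts N A B \<subseteq> rigid_closure (glued_pts N A B) (glued_edges N A B)"
proof -
  have "rigid_closure (left_pts N A) (lattice_edges (left_pts N A)) \<union>
      rigid_closure (right_pts N B) (lattice_edges (right_pts N B))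
      \<subseteq> rigid_closure (glued_pts N A B) (glued_edges N A B)"
    by (intro Un_least rigid_closure_mono) (auto simp: glued_pts_def glued_edges_def)
  then show ?thesis
    using left_pts_rigid[OF assms(1)] right_pts_rigid[OF assms(2)] by (auto simp: glued_pts_def)
qed

lemma left_right_adjacent:
  assumes a: "a \<in> left_pts N A" and b: "b \<in> right_pts N B" and adj: "tri_adj a b"
    and disjoint: "A \<inter> B = {}"
  shows "a \<in> right_pts N B \<or> b \<in> left_pts N A"
proof (rule ccontr)
  assume "\<not> ?thesis"
  then have "a \<notin> {(0, 0), (1, 0)}" "b \<notin> {(0, 0), (1, 0)}"
    using a b by (auto simp: left_pts_def right_pts_def)
  then have a_cases: "snd a \<ge> 1 \<or> (\<exists>i\<in>A. a = (2 * int i + 4, 0))"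
    and b_cases: "snd b \<le> -2 \<or> b \<in> {(1, -1), (2, -1)} \<or> (\<exists>j\<in>B. b = (2 * int j + 4, -1))"
    using a b by (auto simp: left_pts_def right_pts_def)
  have step: "snd b - snd a \<ge> -1" "snd b - snd a = -1 \<Longrightarrow> fst b - fst a \<in> {0, 1}"
    using adj unfolding tri_adj_def tri_norm2_eq_1_iff by (auto simp: prod_eq_iff)
  then obtain i where i: "i \<in> A" "a = (2 * int i + 4, 0)"
    using a_cases b_cases by fastforce
  then have "b \<in> {(1, -1), (2, -1)} \<or> (\<exists>j\<in>B. b = (2 * int j + 4, -1))"
    using b_cases step(1) by auto
  moreover have "fst b - (2 * int i + 4) \<in> {0, 1}"
    using step i calculation by auto
  ultimately show False
    using i disjoint by auto presburger
qed

lemma glued_edges_eq_lattice_edges_iff: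
  "glued_edges N A B = lattice_edges (glued_pts N A B) \<longleftrightarrow> A \<inter> B = {}"
proof
  assume edges: "glued_edges N A B = lattice_edges (glued_pts N A B)"
  show "A \<inter> B = {}"
  proof (rule ccontr)
    assume "A \<inter> B \<noteq> {}"
    then obtain i where "i \<in> A" "i \<in> B" by blast
    then have "((2 * int i + 4, 0), (2 * int i + 4, -1)) \<in> lattice_edges (glued_pts N A B)"
      by (simp add: lattice_edges_def glued_pts_def left_pts_def right_pts_def
          tri_adj_def tri_norm2_def)
    moreover have "(2 * int i + 4, -1) \<notin> left_pts N A" "(2 * int i + 4, 0) \<notin> right_pts N B"
      by (auto simp: left_pts_def right_pts_def)
    then have "((2 * int i + 4, 0), (2 * int i + 4, -1)) \<notin> glued_edges N A B"
      by (simp add: glued_edges_def lattice_edges_def)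
    ultimately show False
      using edges by simp
  qed
next
  assume "A \<inter> B = {}"
  then show "glued_edges N A B = lattice_edges (glued_pts N A B)"
    using left_right_adjacent tri_adj_sym
    by (auto simp: glued_edges_def glued_pts_def lattice_edges_def) blast+
qed

lemma glued_edges_subset: "glued_edges N A B \<subseteq> glued_pts N A B \<times> glued_pts N A B"
  using lattice_edges_subset by (fastforce simp: glued_edges_def glued_pts_def)

lemma unit_triangle_glued_edges: "unit_triangle_edges \<subseteq> glued_edges N A B"
  by (auto simp: unit_triangle_edges_def glued_edges_def lattice_edges_def left_pts_def
      tri_adj_def tri_norm2_def)

lemma penny_graph_glued_iff:
  assumes "A \<subseteq> {1..N}" "B \<subseteq> {1..N}"
  shows "penny_graph (glued_pts N A B) (glued_edges N A B) \<longleftrightarrow> A \<inter> B = {}"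
proof -
  have "\<forall>v. (v, v) \<notin> glued_edges N A B"
    by (simp add: glued_edges_def lattice_edges_irrefl)
  then have "penny_graph (glued_pts N A B) (glued_edges N A B) \<longleftrightarrow>
      glued_edges N A B = lattice_edges (glued_pts N A B)"
    by (intro penny_graph_rigid_iff glued_edges_subset unit_triangle_glued_edges glued_pts_rigid assms)
  then show ?thesis
    by (simp add: glued_edges_eq_lattice_edges_iff)
qed

lemma connected_glued:
  assumes "A \<subseteq> {1..N}" "B \<subseteq> {1..N}"
  shows "connected_graph (glued_pts N A B) (glued_edges N A B)"
proof (rule connected_graphI[OF glued_edges_subset])
  show "sym (glued_edges N A B)"
    using sym_lattice_edges by (simp add: glued_edges_def sym_Un)
  show "(0, 0) \<in> glued_pts N A B"
    by (simp add: glued_pts_def left_pts_def)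
  show "(\<lambda>x y. (x, y) \<in> glued_edges N A B)\<^sup>*\<^sup>* (0, 0) v" if "v \<in> glued_pts N A B" for v
    using that glued_pts_rigid[OF assms] rigid_closure_reachable[OF unit_triangle_glued_edges]
    by blast
qed

lemma card_glued_pts:
  assumes "A \<subseteq> {1..N}" "B \<subseteq> {1..N}" "1 \<le> N"
  shows "finite (glued_pts N A B)" "card (glued_pts N A B) \<le> 48 * N"
proof -
  have box: "glued_pts N A B \<subseteq> {0..2 * int N + 5} \<times> {-3..2}"
    using assms by (auto simp: glued_pts_def left_pts_def right_pts_def)
  then show "finite (glued_pts N A B)"
    by (rule finite_subset) simp
  have "card (glued_pts N A B) \<le> card ({0..2 * int N + 5} \<times> {-3..2::int})"
    by (rule card_mono[OF _ box]) simp
  also have "\<dots> = (2 * N + 6) * 6"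
    by (simp add: card_cartesian_product nat_add_distrib nat_mult_distrib)
  also have "\<dots> \<le> 48 * N"
    using assms(3) by simp
  finally show "card (glued_pts N A B) \<le> 48 * N" .
qed

definition special_nbhd :: "(int \<times> int) set" where
  "special_nbhd = {(0, 0), (1, 0), (0, 1), (1, 1), (1, -1), (2, -1)}"

lemma closed_nbhd_glued_special:
  "closed_nbhd (glued_pts N A B) (glued_edges N A B) {(0, 0), (1, 0)} = special_nbhd"
proof
  show "closed_nbhd (glued_pts N A B) (glued_edges N A B) {(0, 0), (1, 0)} \<subseteq> special_nbhd"
  proof
    fix v assume "v \<in> closed_nbhd (glued_pts N A B) (glued_edges N A B) {(0, 0), (1, 0)}"
    then have "v \<in> {(0, 0), (1, 0)} \<or> (v \<in> glued_pts N A B \<and> (tri_adj (0, 0) v \<or> tri_adj (1, 0) v))"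
      unfolding closed_nbhd_def glued_edges_def lattice_edges_def by blast
    then show "v \<in> special_nbhd"
      unfolding tri_adj_def tri_norm2_eq_1_iff special_nbhd_def glued_pts_def left_pts_def
        right_pts_def
      by (auto simp: prod_eq_iff)
  qed
  show "special_nbhd \<subseteq> closed_nbhd (glued_pts N A B) (glued_edges N A B) {(0, 0), (1, 0)}"
    unfolding special_nbhd_def closed_nbhd_def glued_pts_def glued_edges_def lattice_edges_def
    by (auto simp: left_pts_def right_pts_def tri_adj_def tri_norm2_def)
qed

lemma Restr_glued_edges_special_nbhd:
  "Restr (glued_edges N A B) special_nbhd =
     lattice_edges {(0, 0), (1, 0), (0, 1), (1, 1)} \<union>
     lattice_edges {(0, 0), (1, 0), (1, -1), (2, -1)}"
proof -
  have "left_pts N A \<inter> special_nbhd = {(0, 0), (1, 0), (0, 1), (1, 1)}"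
    "right_pts N B \<inter> special_nbhd = {(0, 0), (1, 0), (1, -1), (2, -1)}"
    by (auto simp: left_pts_def right_pts_def special_nbhd_def)
  then show ?thesis
    by (simp add: glued_edges_def Int_Un_distrib2 lattice_edges_Restr)
qed

section \<open>Encoding as labelled graphs\<close>

lemma glue_map_same_labels:
  assumes "inj_on \<sigma> {..<k}"
  shows "glue_map k \<sigma> \<sigma> w = (if w \<in> \<sigma> ` {..<k} then Inl w else Inr w)"
proof (cases "w \<in> \<sigma> ` {..<k}")
  case True
  then obtain i where i: "i < k" "w = \<sigma> i"
    by auto
  with assms have "(THE i. i < k \<and> w = \<sigma> i) = i"
    by (auto simp: inj_on_def)
  with i show ?thesis
    by (auto simp: glue_map_def)
qed (auto simp: glue_map_def)

definition lattice_code :: "int \<times> int \<Rightarrow> nat" where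
  "lattice_code v = prod_encode (int_encode (fst v), int_encode (snd v))"

lemma inj_lattice_code: "inj lattice_code"
  by (auto simp: inj_def lattice_code_def prod_encode_eq int_encode_eq prod_eq_iff)

definition coded_vertices :: "(int \<times> int) set \<Rightarrow> nat set" where
  "coded_vertices P = lattice_code ` P"

definition coded_edges :: "(int \<times> int) set \<Rightarrow> (nat \<times> nat) set" where
  "coded_edges P = map_prod lattice_code lattice_code ` lattice_edges P"

definition special_label :: "nat \<Rightarrow> nat" where
  "special_label i = lattice_code (if i = 0 then (0, 0) else (1, 0))"

lemma lessThan_2_eq: "{..<2::nat} = {0, 1}"
  by auto

lemma special_label_image: "special_label ` {..<2} = lattice_code ` {(0, 0), (1, 0)}"
  by (simp add: lessThan_2_eq special_label_def)

lemma inj_on_special_label: "inj_on special_label {..<2}"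
proof -
  have "special_label 0 \<noteq> special_label 1"
    using inj_lattice_code by (simp add: special_label_def inj_eq)
  then show ?thesis
    by (simp add: lessThan_2_eq)
qed

lemma wf_coded_lattice_graph:
  assumes "finite P" "{(0, 0), (1, 0)} \<subseteq> P"
  shows "wf_labelled_graph 2 (coded_vertices P) (coded_edges P) special_label"
  using assms wf_graph_image[OF inj_lattice_code wf_graph_lattice_edges] inj_on_special_label
  by (auto simp: wf_labelled_graph_def coded_vertices_def coded_edges_def special_label_image)

text \<open>In the glued graph the points on or above the special edge come from the left graph, the
  points below it from the right graph.\<close>

definition vertex_code :: "int \<times> int \<Rightarrow> nat + nat" where
  "vertex_code v = (if snd v \<ge> 0 then Inl (lattice_code v) else Inr (lattice_code v))"

lemma inj_vertex_code: "inj vertex_code"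
proof (rule injI)
  fix u v
  assume "vertex_code u = vertex_code v"
  then have "lattice_code u = lattice_code v"
    by (auto simp: vertex_code_def split: if_splits)
  then show "u = v"
    by (rule injD[OF inj_lattice_code])
qed

lemma vertex_code_left_pts: "v \<in> left_pts N A \<Longrightarrow> vertex_code v = Inl (lattice_code v)"
  by (auto simp: vertex_code_def left_pts_def)

lemma glue_map_right_pts:
  assumes "v \<in> right_pts N B"
  shows "glue_map 2 special_label special_label (lattice_code v) = vertex_code v"
proof -
  have "v \<in> {(0, 0), (1, 0)} \<longleftrightarrow> snd v \<ge> 0"
    using assms by (auto simp: right_pts_def)
  then have "lattice_code v \<in> special_label ` {..<2} \<longleftrightarrow> snd v \<ge> 0"
    by (simp only: special_label_image inj_image_mem_iff[OF inj_lattice_code])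
  then show ?thesis
    by (simp add: glue_map_same_labels[OF inj_on_special_label] vertex_code_def)
qed

lemma glue_V_coded:
  "glue_V 2 (coded_vertices (left_pts N A)) special_label
      (coded_vertices (right_pts N B)) special_label = vertex_code ` glued_pts N A B"
  unfolding glue_V_def coded_vertices_def glued_pts_def image_Un image_image
  using vertex_code_left_pts glue_map_right_pts by (simp cong: image_cong)

lemma glue_E_coded:
  "glue_E 2 (coded_edges (left_pts N A)) special_label (coded_edges (right_pts N B)) special_label =
     map_prod vertex_code vertex_code ` glued_edges N A B"
proof -
  have "map_prod Inl Inl ` map_prod lattice_code lattice_code ` lattice_edges (left_pts N A) =
      map_prod vertex_code vertex_code ` lattice_edges (left_pts N A)"
    unfolding image_image by (rule image_cong) (auto simp: lattice_edges_def vertex_code_left_pts)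
  moreover have
    "map_prod (glue_map 2 special_label special_label) (glue_map 2 special_label special_label) `
        map_prod lattice_code lattice_code ` lattice_edges (right_pts N B) =
      map_prod vertex_code vertex_code ` lattice_edges (right_pts N B)"
    unfolding image_image by (rule image_cong) (auto simp: lattice_edges_def glue_map_right_pts)
  ultimately show ?thesis
    by (simp add: glue_E_def coded_edges_def glued_edges_def image_Un)
qed

lemma special_vertices_code: "(\<lambda>i. Inl (special_label i)) ` {..<2} = vertex_code ` {(0, 0), (1, 0)}"
  by (simp add: lessThan_2_eq special_label_def vertex_code_def)

lemma wf_left_graph:
  "finite A \<Longrightarrow>
    wf_labelled_graph 2 (coded_vertices (left_pts N A)) (coded_edges (left_pts N A)) special_label"
  by (rule wf_coded_lattice_graph) (auto simp: left_pts_def)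

lemma wf_right_graph:
  "finite B \<Longrightarrow>
    wf_labelled_graph 2 (coded_vertices (right_pts N B)) (coded_edges (right_pts N B)) special_label"
  by (rule wf_coded_lattice_graph) (auto simp: right_pts_def)

lemma special_nbhd_edges_independent:
  assumes "u \<in> vertex_code ` special_nbhd" "v \<in> vertex_code ` special_nbhd"
  shows "(u, v) \<in> map_prod vertex_code vertex_code ` glued_edges N A B \<longleftrightarrow>
    (u, v) \<in> map_prod vertex_code vertex_code ` glued_edges N' A' B'"
proof -
  obtain a b where ab: "a \<in> special_nbhd" "b \<in> special_nbhd" "u = vertex_code a" "v = vertex_code b"
    using assms by blast
  then have "(a, b) \<in> glued_edges N A B \<longleftrightarrow> (a, b) \<in> Restr (glued_edges N A B) special_nbhd"
    "(a, b) \<in> glued_edges N' A' B' \<longleftrightarrow> (a, b) \<in> Restr (glued_edges N' A' B') special_nbhd"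
    by auto
  then show ?thesis
    unfolding ab map_prod_image_mem_iff[OF inj_vertex_code] Restr_glued_edges_special_nbhd by simp
qed

theorem theorem5p1:
  shows "disjointness_expressing penny_graph 6 1"
  unfolding disjointness_expressing_def
  apply (intro exI[of _ "48::real"] conjI allI impI, simp)
  subgoal premises N_pos for N
    apply (rule exI[of _ 2], rule exI[of _ "\<lambda>A. coded_vertices (left_pts N A)"],
        rule exI[of _ "\<lambda>A. coded_edges (left_pts N A)"], rule exI[of _ "\<lambda>_. special_label"],
        rule exI[of _ "\<lambda>B. coded_vertices (right_pts N B)"],
        rule exI[of _ "\<lambda>B. coded_edges (right_pts N B)"], rule exI[of _ "\<lambda>_. special_label"])
    apply (unfold Let_def glue_V_coded glue_E_coded special_vertices_code
        closed_nbhd_image[OF inj_vertex_code] closed_nbhd_glued_special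
        penny_graph_image[OF inj_vertex_code])
    \<comment> \<open>the closed neighbourhoods do not depend on \<open>A\<close>, \<open>B\<close>: the identity is the isomorphism\<close>
    apply (intro conjI allI impI exI[of _ id])
    subgoal for X
      using finite_subset[of X "{1..N}"] by (simp add: wf_left_graph)
    subgoal for X
      using finite_subset[of X "{1..N}"] by (simp add: wf_right_graph)
    subgoal for A B
      by (rule connected_graph_image[OF connected_glued])
    subgoal for A B
      using card_glued_pts[of A N B] card_image_le[of "glued_pts N A B" vertex_code] N_pos by simp
    subgoal
      using card_image_le[of special_nbhd vertex_code] by (simp add: special_nbhd_def)
    subgoal for A B
      by (rule penny_graph_glued_iff)
    by (simp_all add: special_nbhd_edges_independent)
  done

end
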